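(* Let $\varepsilon^*$ be an ordinal and $\bar J=\langle J_\varepsilon:\varepsilon<\varepsilon^*\rangle$ a sequence of ideals, and let $\mu$ be a cardinal. Suppose $\mathrm{IND}(\bar J)$ holds and each $J_\varepsilon$ is $\mathrm{cov}(|\varepsilon^*|,\mu,\aleph_1,2)^+$-complete. Then there is an infinite set $u\subseteq\varepsilon^*$ with $|u|<\mu$ such that $\mathrm{IND}(\bar J\restriction u)$ holds.
   Context: For a set $S$ of ordinals and ideals $J_s$ ($s\in S$) each on the set $\mathrm{Dom}(J_s)$, $\mathrm{IND}(\langle J_s:s\in S\rangle)$ means: for every family $\langle f_{s,u}:s\in S,\ u\subseteq S$ finite with all elements of $u$ greater than $s\rangle$ where $f_{s,u}$ is a function from $\prod_{t\in u}\mathrm{Dom}(J_t)$ to $J_s$, there are $s_0<s_1<\dots$ in $S$ and $\alpha_\ell\in\mathrm{Dom}(J_{s_\ell})$ ($\ell<\omega$) such that for all $\ell<n<\omega$, with $u=\{s_{\ell+1},\dots,s_n\}$, we have $\alpha_\ell\notin f_{s_\ell,u}(\bar\alpha)$ where $\bar\alpha\in\prod_{t\in u}\mathrm{Dom}(J_t)$ assigns $\alpha_m$ to $s_m$. $\bar J\restriction u=\langle J_s:s\in u\rangle$. An ideal is $\chi$-complete if closed under unions of fewer than $\chi$ sets. $\mathrm{cov}(\lambda,\mu,\theta,\sigma)$ is the least cardinality of a family $\mathcal P\subseteq[\lambda]^{<\mu}$ such that every $A\in[\lambda]^{<\theta}$ is included in the union of fewer than $\sigma$ members of $\mathcal P$;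 so $\mathrm{cov}(\lambda,\mu,\aleph_1,2)$ is the least size of $\mathcal P\subseteq[\lambda]^{<\mu}$ such that every countable subset of $\lambda$ is included in some member of $\mathcal P$. *)

theory Defs
  imports Main "HOL-Library.FuncSet" "HOL-Library.Countable_Set"
begin

definition is_ideal :: "'a set \<Rightarrow> 'a set set \<Rightarrow> bool" where
  "is_ideal D I \<longleftrightarrow>
     (\<forall>A\<in>I. A \<subseteq> D) \<and> {} \<in> I \<and> D \<notin> I \<and>
     (\<forall>A\<in>I. \<forall>B. B \<subseteq> A \<longrightarrow> B \<in> I) \<and>
     (\<forall>A\<in>I. \<forall>B\<in>I. A \<union> B \<in> I)"

(* I is closed under unions of at most k many of its members,
   i.e. I is k^+-complete *)
definition closed_unions_upto :: "'a set set \<Rightarrow> 'b rel \<Rightarrow> bool" where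
  "closed_unions_upto I k \<longleftrightarrow>
     (\<forall>\<A>. \<A> \<subseteq> I \<and> (card_of \<A>, k) \<in> ordLeq \<longrightarrow> \<Union>\<A> \<in> I)"

(* P is a witness family for cov(|E|, mu, aleph_1, 2): P \<subseteq> [E]^{<mu} and every
   countable subset of E is included in some member of P. *)
definition cov_family :: "'i set \<Rightarrow> 'c rel \<Rightarrow> 'i set set \<Rightarrow> bool" where
  "cov_family E mu P \<longleftrightarrow>
     (\<forall>X\<in>P. X \<subseteq> E \<and> (card_of X, mu) \<in> ordLess) \<and>
     (\<forall>A. A \<subseteq> E \<and> countable A \<longrightarrow> (\<exists>X\<in>P. A \<subseteq> X))"

(* The assignment
   alpha_bar (s_m := alpha_m) is represented by beta with beta (s m) = alpha_m. *)
definition IND :: "'i::linorder set \<Rightarrow> ('i \<Rightarrow> 'a set) \<Rightarrow> ('i \<Rightarrow> 'a set set) \<Rightarrow> bool" where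
  "IND S Dom J \<longleftrightarrow>
     (\<forall>f :: 'i \<Rightarrow> 'i set \<Rightarrow> ('i \<Rightarrow> 'a) \<Rightarrow> 'a set.
        (\<forall>s\<in>S. \<forall>u. finite u \<and> u \<subseteq> S \<and> (\<forall>t\<in>u. s < t) \<longrightarrow>
            (\<forall>x\<in>PiE u Dom. f s u x \<in> J s))
        \<longrightarrow>
        (\<exists>(sq :: nat \<Rightarrow> 'i) (\<beta> :: 'i \<Rightarrow> 'a).
            (\<forall>n. sq n \<in> S) \<and> strict_mono sq \<and>
            (\<forall>n. \<beta> (sq n) \<in> Dom (sq n)) \<and>
            (\<forall>l n. l < n \<longrightarrow>
               \<beta> (sq l) \<notin> f (sq l) (sq ` {Suc l..n}) (restrict \<beta> (sq ` {Suc l..n})))))"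

end

theory Submission
  imports Defs
begin

text \<open>
  Suppose no member X of a covering family P witnesses IND, and pick for each X a family
  f_X that refutes IND on X. At a pair (s, u) take the union of the values of all f_X with
  {s} \<union> u \<subseteq> X: these are at most |P| members of J s, so by completeness the union F is
  again a legal family on E. IND on E yields an \<omega>-sequence for F; its range is countable,
  hence contained in some X \<in> P, and the same sequence then defeats f_X, as f_X \<subseteq> F on X.
\<close>

definition IND_family ::
    "'i::linorder set \<Rightarrow> ('i \<Rightarrow> 'a set) \<Rightarrow> ('i \<Rightarrow> 'a set set) \<Rightarrow>
     ('i \<Rightarrow> 'i set \<Rightarrow> ('i \<Rightarrow> 'a) \<Rightarrow> 'a set) \<Rightarrow> bool" where
  "IND_family S Dom J f \<longleftrightarrow>
     (\<forall>s\<in>S. \<forall>u. finite u \<and> u \<subseteq> S \<and> (\<forall>t\<in>u. s < t) \<longrightarrow> (\<forall>x\<in>PiE u Dom. f s u x \<in> J s))"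

definition IND_sequence ::
    "'i::linorder set \<Rightarrow> ('i \<Rightarrow> 'a set) \<Rightarrow> ('i \<Rightarrow> 'i set \<Rightarrow> ('i \<Rightarrow> 'a) \<Rightarrow> 'a set) \<Rightarrow>
     (nat \<Rightarrow> 'i) \<Rightarrow> ('i \<Rightarrow> 'a) \<Rightarrow> bool" where
  "IND_sequence S Dom f sq \<beta> \<longleftrightarrow>
     (\<forall>n. sq n \<in> S) \<and> strict_mono sq \<and> (\<forall>n. \<beta> (sq n) \<in> Dom (sq n)) \<and>
     (\<forall>l n. l < n \<longrightarrow>
        \<beta> (sq l) \<notin> f (sq l) (sq ` {Suc l..n}) (restrict \<beta> (sq ` {Suc l..n})))"

lemma IND_iff_sequences:
  "IND S Dom J \<longleftrightarrow> (\<forall>f. IND_family S Dom J f \<longrightarrow> (\<exists>sq \<beta>. IND_sequence S Dom f sq \<beta>))"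
  unfolding IND_def IND_family_def IND_sequence_def by simp

lemma IND_infinite:
  assumes "IND S Dom J" and "\<forall>s\<in>S. {} \<in> J s"
  shows "infinite S"
proof -
  have "IND_family S Dom J (\<lambda>_ _ _. {})"
    using assms(2) unfolding IND_family_def by simp
  then obtain sq :: "nat \<Rightarrow> _" and \<beta> where "IND_sequence S Dom (\<lambda>_ _ _. {}) sq \<beta>"
    using assms(1) unfolding IND_iff_sequences by blast
  then have "range sq \<subseteq> S" "inj sq"
    by (auto simp: IND_sequence_def strict_mono_imp_inj_on)
  then show ?thesis
    using range_inj_infinite finite_subset by blast
qed

lemma IND_sequence_restrict:
  assumes "IND_sequence S Dom F sq \<beta>" and "range sq \<subseteq> X"
    and "\<And>s u x. s \<in> X \<Longrightarrow> u \<subseteq> X \<Longrightarrow> f s u x \<subseteq> F s u x"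
  shows "IND_sequence X Dom f sq \<beta>"
  unfolding IND_sequence_def
proof (intro conjI allI impI)
  fix l n :: nat
  assume "l < n"
  let ?u = "sq ` {Suc l..n}"
  have "sq l \<in> X" "?u \<subseteq> X"
    using assms(2) by auto
  then have "f (sq l) ?u (restrict \<beta> ?u) \<subseteq> F (sq l) ?u (restrict \<beta> ?u)"
    by (rule assms(3))
  then show "\<beta> (sq l) \<notin> f (sq l) ?u (restrict \<beta> ?u)"
    using assms(1) \<open>l < n\<close> unfolding IND_sequence_def by blast
qed (use assms in \<open>auto simp: IND_sequence_def\<close>)

lemma IND_family_Union:
  assumes families: "\<forall>X\<in>P. IND_family X Dom J (f X)"
    and complete: "\<forall>s\<in>S. closed_unions_upto (J s) (card_of P)"
    and "\<forall>X\<in>P. X \<subseteq> S"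
  shows "IND_family S Dom J (\<lambda>s u x. \<Union>X\<in>{X\<in>P. s \<in> X \<and> u \<subseteq> X}. f X s u x)"
  unfolding IND_family_def
proof (intro ballI allI impI)
  fix s u x
  assume s: "s \<in> S" and u: "finite u \<and> u \<subseteq> S \<and> (\<forall>t\<in>u. s < t)" and x: "x \<in> PiE u Dom"
  define P' where "P' = {X\<in>P. s \<in> X \<and> u \<subseteq> X}"
  have "(\<lambda>X. f X s u x) ` P' \<subseteq> J s"
    using families u x unfolding P'_def IND_family_def by blast
  moreover have "(card_of ((\<lambda>X. f X s u x) ` P'), card_of P) \<in> ordLeq"
  proof -
    have "(card_of P', card_of P) \<in> ordLeq"
      by (rule card_of_mono1) (auto simp: P'_def)
    then show ?thesis
      using card_of_image ordLeq_transitive by blast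
  qed
  ultimately have "\<Union>((\<lambda>X. f X s u x) ` P') \<in> J s"
    using complete s unfolding closed_unions_upto_def by blast
  then show "(\<Union>X\<in>{X\<in>P. s \<in> X \<and> u \<subseteq> X}. f X s u x) \<in> J s"
    by (simp add: P'_def)
qed

lemma IND_on_covering_member:
  assumes ind: "IND S Dom J"
    and subsets: "\<forall>X\<in>P. X \<subseteq> S"
    and covering: "\<forall>A. A \<subseteq> S \<and> countable A \<longrightarrow> (\<exists>X\<in>P. A \<subseteq> X)"
    and complete: "\<forall>s\<in>S. closed_unions_upto (J s) (card_of P)"
  shows "\<exists>X\<in>P. IND X Dom J"
proof (rule ccontr)
  assume "\<not> ?thesis"
  then have "\<forall>X\<in>P. \<exists>g. IND_family X Dom J g \<and> \<not> (\<exists>sq \<beta>. IND_sequence X Dom g sq \<beta>)"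
    unfolding IND_iff_sequences by blast
  then obtain f where refuting:
    "\<forall>X\<in>P. IND_family X Dom J (f X) \<and> \<not> (\<exists>sq \<beta>. IND_sequence X Dom (f X) sq \<beta>)"
    by (auto dest: bchoice)
  define F where "F s u x = (\<Union>X\<in>{X\<in>P. s \<in> X \<and> u \<subseteq> X}. f X s u x)" for s u x
  have "IND_family S Dom J F"
    unfolding F_def using IND_family_Union refuting complete subsets by blast
  then obtain sq :: "nat \<Rightarrow> _" and \<beta> where seq: "IND_sequence S Dom F sq \<beta>"
    using ind unfolding IND_iff_sequences by blast
  then have "range sq \<subseteq> S" "countable (range sq)"
    unfolding IND_sequence_def by auto
  then obtain X where X: "X \<in> P" "range sq \<subseteq> X"
    using covering by blast
  have "\<And>s u x. s \<in> X \<Longrightarrow> u \<subseteq> X \<Longrightarrow> f X s u x \<subseteq> F s u x"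
    unfolding F_def using X(1) by blast
  then have "IND_sequence X Dom (f X) sq \<beta>"
    using IND_sequence_restrict[OF seq X(2)] by blast
  then show False
    using refuting X(1) by blast
qed

theorem mainTheorem7:
  fixes E :: "'i::wellorder set"
    and Dom :: "'i \<Rightarrow> 'a set"
    and J :: "'i \<Rightarrow> 'a set set"
    and mu :: "'c rel"
  assumes mu_card: "Card_order mu"
    and ideals: "\<forall>e\<in>E. is_ideal (Dom e) (J e)"
    and ind: "IND E Dom J"
    and complete: "\<exists>P. cov_family E mu P \<and>
                     (\<forall>Q. cov_family E mu Q \<longrightarrow> (card_of P, card_of Q) \<in> ordLeq) \<and>
                     (\<forall>e\<in>E. closed_unions_upto (J e) (card_of P))"
  shows "\<exists>u. u \<subseteq> E \<and> infinite u \<and> (card_of u, mu) \<in> ordLess \<and> IND u Dom J"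
proof -
  obtain P where cov: "cov_family E mu P" and closed: "\<forall>e\<in>E. closed_unions_upto (J e) (card_of P)"
    using complete by blast
  have "\<forall>X\<in>P. X \<subseteq> E" "\<forall>A. A \<subseteq> E \<and> countable A \<longrightarrow> (\<exists>X\<in>P. A \<subseteq> X)"
    using cov unfolding cov_family_def by auto
  then obtain X where X: "X \<in> P" and ind_X: "IND X Dom J"
    using IND_on_covering_member[OF ind _ _ closed] by blast
  have small: "X \<subseteq> E" "(card_of X, mu) \<in> ordLess"
    using cov X unfolding cov_family_def by auto
  moreover have "infinite X"
    using IND_infinite[OF ind_X] ideals small(1) unfolding is_ideal_def by blast
  ultimately show ?thesis
    using ind_X by blast
qed

end
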